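(* Let $q$ be an odd prime power, let $1\le n\le q^2-2$, and write $n=u+vq$ with $0\le u,v\le q-1$. Define \[ \mathrm{I}=\sum_{\substack{k\ge 1,\ j\ge 0\\ k+j\le q-1\\ 2k-j\equiv 0\pmod{q-1}\\ q(q-1)+k-j=n}}\binom{q-1-k}{j}(-1)^j . \] Then \[ \mathrm{I}=\sum_{\max\{-1,\,v-q+\frac{u+v}{q-1}\}<s\le v-q+\frac{u+v}{q-1}+1}\binom{u+v-(s-v+q-1)(q-1)}{(s-2v+2q)(q-1)-2(u+v)}, \] the sum being over integers $s$ in the indicated range.
   Context: For integers $m\ge 0$ and $k$, $\binom mk$ is the usual binomial coefficient, equal to $0$ unless $0\le k\le m$. *)

theory Defs
  imports Complex_Main "HOL-Number_Theory.Number_Theory"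
begin

definition ibinom :: "int \<Rightarrow> int \<Rightarrow> int" where
  "ibinom m k = (if 0 \<le> k \<and> k \<le> m then int (nat m choose nat k) else 0)"

end

theory Submission
  imports Defs
begin

text \<open>Write m = q - 1 and d = n - q m. In the sum I we have k - j = d, so 2k - j = k + d is a
  multiple of m strictly between -m and 2m; hence k + d = m if d \<ge> 0 and k + d = 0 if d < 0.
  This leaves at most one term, equal to binom(d, m - 2d) resp. binom(m + d, -2d), with sign +1
  because m is even. On the right-hand side the bound v - q + (u + v)/(q - 1) is just d/m, so the
  only admissible s is floor(d/m) + 1, which is 1 resp. 0 and gives the same binomial.
  Of the hypotheses only n \<le> q^2 - 2 (in the form d < m), n = u + v q and the parity of q matter.\<close>

definition signed_binom_sum :: "nat \<Rightarrow> int \<Rightarrow> int" where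
  "signed_binom_sum m d =
     (\<Sum>(k, j) \<in> {(k, j). 1 \<le> k \<and> k + j \<le> m \<and> int m dvd (2 * int k - int j) \<and> int k - int j = d}.
        ibinom (int m - int k) (int j) * (-1) ^ j)"

lemma dvd_between_neg_and_double:
  fixes m z :: int
  assumes "m dvd z" "- m < z" "z < 2 * m"
  shows "z = 0 \<or> z = m"
proof -
  obtain c where c: "z = m * c" using assms(1) by blast
  have "m > 0" using assms(2,3) by linarith
  moreover have "m * - 1 < m * c" "m * c < m * 2" using assms(2,3) c by (simp_all add: mult.commute)
  ultimately have "- 1 < c" "c < 2" using mult_less_cancel_left_pos by blast+
  then have "c = 0 \<or> c = 1" by linarith
  then show ?thesis using c by auto
qed

lemma signed_binom_sum_index_determined:
  assumes "d < int m" "1 \<le> k" "k + j \<le> m"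
    and "int m dvd (2 * int k - int j)" "int k - int j = d"
  shows "int k + d = (if 0 \<le> d then int m else 0)"
proof -
  have "2 * int k - int j = int k + d" using assms(5) by simp
  moreover have "- int m < int k + d" "int k + d < 2 * int m" using assms(1-3,5) by linarith+
  ultimately have "int k + d = 0 \<or> int k + d = int m"
    using assms(4) by (intro dvd_between_neg_and_double) auto
  then show ?thesis using assms(2,3,5) by auto
qed

lemma signed_binom_sum_eq:
  assumes "even m" "d < int m"
  shows "signed_binom_sum m d =
    (if 0 \<le> d then ibinom d (int m - 2 * d) else ibinom (int m + d) (- 2 * d))"
proof -
  define e where "e = (if 0 \<le> d then int m else 0)"
  have e: "even e" "1 \<le> e - d" using assms unfolding e_def by auto
  let ?S = "{(k, j). 1 \<le> k \<and> k + j \<le> m \<and> int m dvd (2 * int k - int j) \<and> int k - int j = d}"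
  have "(k, j) \<in> ?S \<longleftrightarrow> k + j \<le> m \<and> int k = e - d \<and> int j = e - 2 * d" for k j
  proof
    assume "(k, j) \<in> ?S"
    then have kj: "1 \<le> k" "k + j \<le> m" "int m dvd (2 * int k - int j)" "int k - int j = d"
      by auto
    then have "int k + d = e" unfolding e_def by (rule signed_binom_sum_index_determined[OF assms(2)])
    then show "k + j \<le> m \<and> int k = e - d \<and> int j = e - 2 * d" using kj by linarith
  next
    assume kj: "k + j \<le> m \<and> int k = e - d \<and> int j = e - 2 * d"
    then have "2 * int k - int j = e" by linarith
    moreover have "int m dvd e" unfolding e_def by simp
    ultimately show "(k, j) \<in> ?S" using kj e by auto
  qed
  then have S: "?S = {(k, j). k + j \<le> m \<and> int k = e - d \<and> int j = e - 2 * d}"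
    by auto
  have "signed_binom_sum m d = ibinom (int m - e + d) (e - 2 * d)"
  proof (cases "0 \<le> e - 2 * d \<and> e - 2 * d \<le> int m - e + d")
    case True
    then have "?S = {(nat (e - d), nat (e - 2 * d))}" unfolding S using e by auto
    moreover have "even (nat (e - 2 * d))" using e True by (simp add: even_nat_iff)
    ultimately show ?thesis unfolding signed_binom_sum_def using e True by (simp add: algebra_simps)
  next
    case False
    then have "?S = {}" unfolding S by auto
    then have "signed_binom_sum m d = 0" unfolding signed_binom_sum_def by (simp only: sum.empty)
    moreover have "ibinom (int m - e + d) (e - 2 * d) = 0" using False by (simp add: ibinom_def)
    ultimately show ?thesis by simp
  qed
  then show ?thesis unfolding e_def by simp
qed

lemma ints_in_Ioc_max_neg1:
  fixes x :: real
  shows "{s::int. max (-1) x < real_of_int s \<and> real_of_int s \<le> x + 1}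
     = (if -1 \<le> x then {\<lfloor>x\<rfloor> + 1} else {})"
proof (cases "-1 \<le> x")
  case True
  have "max (-1) x < real_of_int s \<and> real_of_int s \<le> x + 1 \<longleftrightarrow> s = \<lfloor>x\<rfloor> + 1" for s
  proof
    assume "max (-1) x < real_of_int s \<and> real_of_int s \<le> x + 1"
    then have "\<lfloor>x\<rfloor> = s - 1" by (simp add: floor_eq_iff)
    then show "s = \<lfloor>x\<rfloor> + 1" by simp
  next
    assume s: "s = \<lfloor>x\<rfloor> + 1"
    have "-1 \<le> \<lfloor>x\<rfloor>" using True by (simp add: le_floor_iff)
    then show "max (-1) x < real_of_int s \<and> real_of_int s \<le> x + 1"
      unfolding s using of_int_floor_le[of x] real_of_int_floor_add_one_gt[of x] by simp
  qed
  then show ?thesis using True by simp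
next
  case False
  have "\<not> (max (-1) x < real_of_int s \<and> real_of_int s \<le> x + 1)" for s
  proof
    assume s: "max (-1) x < real_of_int s \<and> real_of_int s \<le> x + 1"
    then have "0 \<le> s" by simp
    then show False using s False by linarith
  qed
  then show ?thesis using False by simp
qed

lemma floor_binom_sum_eq:
  assumes "0 < m" "d < int m"
  shows "(\<Sum>s \<in> {s::int. max (-1) (real_of_int d / real m) < real_of_int s
                      \<and> real_of_int s \<le> real_of_int d / real m + 1}.
            ibinom (d + int m - s * int m) (s * int m - 2 * d))
       = (if 0 \<le> d then ibinom d (int m - 2 * d) else ibinom (int m + d) (- 2 * d))"
proof -
  have m: "real m > 0" using assms(1) by simp
  consider "0 \<le> d" | "- int m \<le> d" "d < 0" | "d < - int m" by linarith
  then show ?thesis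
  proof cases
    case 1
    then have "\<lfloor>real_of_int d / real m\<rfloor> = 0" "-1 \<le> real_of_int d / real m"
      using m assms(2) by (simp_all add: floor_eq_iff divide_less_eq le_divide_eq)
    then show ?thesis using 1 unfolding ints_in_Ioc_max_neg1 by simp
  next
    case 2
    then have "\<lfloor>real_of_int d / real m\<rfloor> = -1" "-1 \<le> real_of_int d / real m"
      using m by (simp_all add: floor_eq_iff divide_less_eq le_divide_eq)
    then show ?thesis using 2 unfolding ints_in_Ioc_max_neg1 by (simp add: add.commute)
  next
    case 3
    then have "real_of_int d / real m < -1" using m by (simp add: divide_less_eq)
    then show ?thesis using 3 unfolding ints_in_Ioc_max_neg1 by (simp add: ibinom_def)
  qed
qed

lemma floor_binom_sum_digits:
  fixes q m u v :: nat
  assumes "int q = int m + 1" "0 < m" "d = int u + int v * int q - int q * int m"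
  shows "(\<Sum>s \<in> {s::int. max (-1) (real v - real q + (real u + real v) / (real q - 1)) < real_of_int s
                  \<and> real_of_int s \<le> real v - real q + (real u + real v) / (real q - 1) + 1}.
            ibinom (int u + int v - (s - int v + int q - 1) * (int q - 1))
                   ((s - 2 * int v + 2 * int q) * (int q - 1) - 2 * (int u + int v)))
       = (\<Sum>s \<in> {s::int. max (-1) (real_of_int d / real m) < real_of_int s
                      \<and> real_of_int s \<le> real_of_int d / real m + 1}.
            ibinom (d + int m - s * int m) (s * int m - 2 * d))"
proof -
  have "real q = real m + 1" using assms(1) by linarith
  moreover have "real_of_int d = real u + real v * (real m + 1) - (real m + 1) * real m"
    unfolding assms(3) assms(1) by simp
  ultimately have "real v - real q + (real u + real v) / (real q - 1) = real_of_int d / real m"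
    using assms(2) by (simp add: field_simps)
  moreover have
    "int u + int v - (s - int v + int q - 1) * (int q - 1) = d + int m - s * int m"
    "(s - 2 * int v + 2 * int q) * (int q - 1) - 2 * (int u + int v) = s * int m - 2 * d" for s
    unfolding assms(1,3) by (simp_all add: algebra_simps)
  ultimately show ?thesis by presburger
qed

theorem lemma4p1:
  fixes q n u v :: nat
  assumes "primepow q" and "odd q"
    and "1 \<le> n" and "n \<le> q^2 - 2"
    and "n = u + v * q" and "u \<le> q - 1" and "v \<le> q - 1"
  shows "(\<Sum>(k, j) \<in> {(k, j). 1 \<le> k \<and> k + j \<le> q - 1
              \<and> (int q - 1) dvd (2 * int k - int j)
              \<and> int q * (int q - 1) + int k - int j = int n}.
            ibinom (int q - 1 - int k) (int j) * (-1) ^ j)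
       = (\<Sum>s \<in> {s::int. max (-1) (real v - real q + (real u + real v) / (real q - 1)) < real_of_int s
                  \<and> real_of_int s \<le> real v - real q + (real u + real v) / (real q - 1) + 1}.
            ibinom (int u + int v - (s - int v + int q - 1) * (int q - 1))
                   ((s - 2 * int v + 2 * int q) * (int q - 1) - 2 * (int u + int v)))"
proof -
  define m where "m = q - 1"
  have "1 < q" using primepow_gt_Suc_0[OF assms(1)] by simp
  then have q: "q - 1 = m" "int q - 1 = int m" "int q = int m + 1" "0 < m" "even m"
    using assms(2) unfolding m_def by auto
  define d where "d = int n - int q * int m"
  have "2 * 1 \<le> q * q" using \<open>1 < q\<close> by (intro mult_le_mono) auto
  then have "int n \<le> int q * int q - 2"
    using assms(4) unfolding power2_eq_square of_nat_mult[symmetric] by linarith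
  then have "d < int m" unfolding d_def q(3) by (simp add: algebra_simps)
  have d: "int q * int m + int k - int j = int n \<longleftrightarrow> int k - int j = d" for k j
    unfolding d_def by linarith
  have digits: "d = int u + int v * int q - int q * int m" using assms(5) unfolding d_def by simp
  have "signed_binom_sum m d =
      (\<Sum>s \<in> {s::int. max (-1) (real_of_int d / real m) < real_of_int s
                      \<and> real_of_int s \<le> real_of_int d / real m + 1}.
         ibinom (d + int m - s * int m) (s * int m - 2 * d))"
    unfolding signed_binom_sum_eq[OF q(5) \<open>d < int m\<close>]
    by (rule floor_binom_sum_eq[OF q(4) \<open>d < int m\<close>, symmetric])
  then show ?thesis
    unfolding floor_binom_sum_digits[OF q(3,4) digits] unfolding signed_binom_sum_def q(1,2) d .
qed

end
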